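(* Let $\mathcal{X}_1,\mathcal{X}_2$ be non-empty sets, $\mathcal{B}_i\subseteq\mathcal{P}(\mathcal{X}_i)\setminus\{\emptyset\}$ for $i\in\{1,2\}$, and for each $i\in\{1,2\}$ let $\mathcal{B}'_i\supseteq\mathcal{B}_i$ be a set each of whose elements is a finite disjoint union of events in $\mathcal{B}_i$. Let $\mathcal{D}_i$ be a coherent set of desirable gambles on $\mathcal{X}_i$ and $\underline{P}_i$ a coherent conditional lower prevision on $\mathcal{C}_i\subseteq\mathcal{C}(\mathcal{X}_i)$, $i\in\{1,2\}$. Then the set $\mathcal{D}_1\otimes\mathcal{D}_2$ constructed from $(\mathcal{B}_1,\mathcal{B}_2)$ equals the one constructed from $(\mathcal{B}'_1,\mathcal{B}'_2)$, and likewise $\underline{P}_1\otimes\underline{P}_2$ constructed from $(\mathcal{B}_1,\mathcal{B}_2)$ equals the one constructed from $(\mathcal{B}'_1,\mathcal{B}'_2)$.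
   Context: Gambles on a non-empty set $\mathcal{X}$ are bounded real functions; $\mathcal{G}(\mathcal{X})$ is the set of gambles, $\mathcal{G}_{>0}(\mathcal{X})$ the non-negative non-zero gambles, $\mathbb{I}_A$ the indicator of $A$. For $\mathcal{A}\subseteq\mathcal{G}(\mathcal{X})$: $\mathrm{posi}(\mathcal{A}):=\{\sum_{i=1}^n\lambda_if_i\colon n\in\mathbb{N},\lambda_i>0,f_i\in\mathcal{A}\}$, $\mathcal{E}(\mathcal{A}):=\mathrm{posi}(\mathcal{A}\cup\mathcal{G}_{>0}(\mathcal{X}))$. A coherent set of desirable gambles $\mathcal{D}\subseteq\mathcal{G}(\mathcal{X})$ satisfies: (D1) $f\geq0,f\neq0\Rightarrow f\in\mathcal{D}$; (D2) $f\in\mathcal{D},\lambda>0\Rightarrow\lambda f\in\mathcal{D}$; (D3) $f,g\in\mathcal{D}\Rightarrow f+g\in\mathcal{D}$; (D4) $f\leq0\Rightarrow f\notin\mathcal{D}$. $\mathcal{C}(\mathcal{X}):=\mathcal{G}(\mathcal{X})\times(\mathcal{P}(\mathcal{X})\setminus\{\emptyset\})$; a conditional lower prevision on $\mathcal{C}\subseteq\mathcal{C}(\mathcal{X})$ is a map $(f,B)\mapsto\underline{P}(f\vert B)\in\mathbb{R}\cup\{\pm\infty\}$. For $\mathcal{D}\subseteq\mathcal{G}(\mathcal{X})$, $\underline{P}_{\mathcal{D}}(f\vert B):=\sup\{\mu\in\mathbb{R}\colon[f-\mu]\mathbb{I}_B\in\mathcal{D}\}$. $\underline{P}$ is coherent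 if $\underline{P}=\underline{P}_{\mathcal{D}}$ on its domain for some coherent set of desirable gambles $\mathcal{D}$. For coherent $\underline{P}$ on $\mathcal{C}$, $\mathcal{E}(\underline{P}):=\mathcal{E}(\{[f-\mu]\mathbb{I}_B\colon(f,B)\in\mathcal{C},\mu<\underline{P}(f\vert B)\})$. Gambles on $\mathcal{X}_i$ are identified with their cylindrical extensions to $\mathcal{X}_1\times\mathcal{X}_2$, events $B\subseteq\mathcal{X}_1$ with $B\times\mathcal{X}_2$ (similarly for $\mathcal{X}_2$). Given sets of conditioning events $\mathcal{B}_1,\mathcal{B}_2$: $\mathcal{D}_1\otimes\mathcal{D}_2:=\mathcal{E}(\mathcal{A}_{1\to2}\cup\mathcal{A}_{2\to1})$, with $\mathcal{A}_{1\to2}:=\{f_2(X_2)\mathbb{I}_{B_1}(X_1)\colon f_2\in\mathcal{D}_2,B_1\in\mathcal{B}_1\cup\{\mathcal{X}_1\}\}$ and $\mathcal{A}_{2\to1}:=\{f_1(X_1)\mathbb{I}_{B_2}(X_2)\colon f_1\in\mathcal{D}_1,B_2\in\mathcal{B}_2\cup\{\mathcal{X}_2\}\}$; and $(\underline{P}_1\otimes\underline{P}_2)(f\vert B):=\underline{P}_{\mathcal{D}}(f\vert B)$ for $(f,B)\in\mathcal{C}(\mathcal{X}_1\times\mathcal{X}_2)$ with $\mathcal{D}=\mathcal{E}(\underline{P}_1)\otimes\mathcal{E}(\underline{P}_2)$. *)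

theory Defs
  imports Main "HOL-Library.Extended_Real" "HOL-Library.Indicator_Function"
begin

definition gambles :: "('a \<Rightarrow> real) set" where
  "gambles = {f. \<exists>M. \<forall>x. \<bar>f x\<bar> \<le> M}"

definition gambles_pos :: "('a \<Rightarrow> real) set" where
  "gambles_pos = {f \<in> gambles. (\<forall>x. 0 \<le> f x) \<and> f \<noteq> (\<lambda>x. 0)}"

definition posi :: "('a \<Rightarrow> real) set \<Rightarrow> ('a \<Rightarrow> real) set" where
  "posi A = {g. \<exists>n::nat. \<exists>lam fs. n \<ge> 1 \<and> (\<forall>i<n. lam i > (0::real) \<and> fs i \<in> A)
                 \<and> g = (\<lambda>x. \<Sum>i<n. lam i * fs i x)}"

definition natext :: "('a \<Rightarrow> real) set \<Rightarrow> ('a \<Rightarrow> real) set" where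
  "natext A = posi (A \<union> gambles_pos)"

definition coherent_sdg :: "('a \<Rightarrow> real) set \<Rightarrow> bool" where
  "coherent_sdg D \<longleftrightarrow> D \<subseteq> gambles
     \<and> (\<forall>f \<in> gambles. (\<forall>x. 0 \<le> f x) \<and> f \<noteq> (\<lambda>x. 0) \<longrightarrow> f \<in> D)
     \<and> (\<forall>f \<in> D. \<forall>lam::real. lam > 0 \<longrightarrow> (\<lambda>x. lam * f x) \<in> D)
     \<and> (\<forall>f \<in> D. \<forall>g \<in> D. (\<lambda>x. f x + g x) \<in> D)
     \<and> (\<forall>f \<in> gambles. (\<forall>x. f x \<le> 0) \<longrightarrow> f \<notin> D)"

definition cond_domain :: "(('a \<Rightarrow> real) \<times> 'a set) set" where
  "cond_domain = gambles \<times> {B. B \<noteq> {}}"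

definition cgamble :: "('a \<Rightarrow> real) \<Rightarrow> real \<Rightarrow> 'a set \<Rightarrow> 'a \<Rightarrow> real" where
  "cgamble f mu B = (\<lambda>x. (f x - mu) * indicator B x)"

text \<open>P_D(f|B) = sup {mu. [f-mu] I_B \<in> D}, with sup of the empty set = -\<infinity>.\<close>
definition lpr_of :: "('a \<Rightarrow> real) set \<Rightarrow> ('a \<Rightarrow> real) \<Rightarrow> 'a set \<Rightarrow> ereal" where
  "lpr_of D f B = Sup {ereal mu | mu. cgamble f mu B \<in> D}"

definition coherent_clp :: "(('a \<Rightarrow> real) \<times> 'a set) set \<Rightarrow> (('a \<Rightarrow> real) \<Rightarrow> 'a set \<Rightarrow> ereal) \<Rightarrow> bool" where
  "coherent_clp C P \<longleftrightarrow> C \<subseteq> cond_domain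
     \<and> (\<exists>D. coherent_sdg D \<and> (\<forall>(f, B) \<in> C. P f B = lpr_of D f B))"

definition natext_lp :: "(('a \<Rightarrow> real) \<times> 'a set) set \<Rightarrow> (('a \<Rightarrow> real) \<Rightarrow> 'a set \<Rightarrow> ereal) \<Rightarrow> ('a \<Rightarrow> real) set" where
  "natext_lp C P = natext {cgamble f mu B | f mu B. (f, B) \<in> C \<and> ereal mu < P f B}"

definition tensor_sdg :: "'a set set \<Rightarrow> 'b set set \<Rightarrow> ('a \<Rightarrow> real) set \<Rightarrow> ('b \<Rightarrow> real) set
     \<Rightarrow> ('a \<times> 'b \<Rightarrow> real) set" where
  "tensor_sdg B1 B2 D1 D2 = natext
     ({(\<lambda>(x1, x2). f2 x2 * indicator E1 x1) | f2 E1. f2 \<in> D2 \<and> E1 \<in> B1 \<union> {UNIV}}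
      \<union> {(\<lambda>(x1, x2). f1 x1 * indicator E2 x2) | f1 E2. f1 \<in> D1 \<and> E2 \<in> B2 \<union> {UNIV}})"

definition tensor_lp :: "'a set set \<Rightarrow> 'b set set
     \<Rightarrow> (('a \<Rightarrow> real) \<times> 'a set) set \<Rightarrow> (('a \<Rightarrow> real) \<Rightarrow> 'a set \<Rightarrow> ereal)
     \<Rightarrow> (('b \<Rightarrow> real) \<times> 'b set) set \<Rightarrow> (('b \<Rightarrow> real) \<Rightarrow> 'b set \<Rightarrow> ereal)
     \<Rightarrow> ('a \<times> 'b \<Rightarrow> real) \<Rightarrow> ('a \<times> 'b) set \<Rightarrow> ereal" where
  "tensor_lp B1 B2 C1 P1 C2 P2 f B =
     lpr_of (tensor_sdg B1 B2 (natext_lp C1 P1) (natext_lp C2 P2)) f B"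

definition fin_disj_union_of :: "'a set set \<Rightarrow> 'a set \<Rightarrow> bool" where
  "fin_disj_union_of B E \<longleftrightarrow>
     (\<exists>S. finite S \<and> S \<noteq> {} \<and> S \<subseteq> B \<and> pairwise disjnt S \<and> E = \<Union>S)"

end

theory Submission
  imports Defs
begin

text \<open>Refining a conditioning event into a finite disjoint union of events does not enlarge the
  generated cone: \<open>f \<cdot> \<I>\<^bsub>E\<^sub>1 \<union> \<dots> \<union> E\<^sub>n\<^esub> = f \<cdot> \<I>\<^bsub>E\<^sub>1\<^esub> + \<dots> + f \<cdot> \<I>\<^bsub>E\<^sub>n\<^esub>\<close> is a positive combination
  of generators already present for \<open>\<B>\<^sub>i\<close>, while the generators for \<open>\<B>\<^sub>i\<close> are among those for \<open>\<B>'\<^sub>i\<close>.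
  So both generating sets have the same positive hull, hence the same natural extension, and the
  induced lower previsions coincide as well.\<close>

lemma posiI:
  fixes n :: nat and lam :: "nat \<Rightarrow> real"
  assumes "n \<ge> 1" "\<And>i. i < n \<Longrightarrow> lam i > 0 \<and> fs i \<in> X"
  shows "(\<lambda>x. \<Sum>i<n. lam i * fs i x) \<in> posi X"
  unfolding posi_def using assms by (intro CollectI exI[of _ n] exI[of _ lam] exI[of _ fs]) auto

lemma posiE:
  assumes "g \<in> posi X"
  obtains n :: nat and lam :: "nat \<Rightarrow> real" and fs
  where "n \<ge> 1" "\<forall>i<n. lam i > 0 \<and> fs i \<in> X" "g = (\<lambda>x. \<Sum>i<n. lam i * fs i x)"
  using assms unfolding posi_def by blast

lemma posi_superset: "X \<subseteq> posi X"
proof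
  fix g assume "g \<in> X"
  then have "(\<lambda>x. \<Sum>i<1::nat. 1 * g x) \<in> posi X"
    by (intro posiI) auto
  then show "g \<in> posi X" by simp
qed

lemma posi_mono: "X \<subseteq> Y \<Longrightarrow> posi X \<subseteq> posi Y"
  unfolding posi_def by blast

lemma sum_lessThan_add_nat:
  fixes F :: "nat \<Rightarrow> 'a::comm_monoid_add"
  shows "(\<Sum>i<m + n. F i) = (\<Sum>i<m. F i) + (\<Sum>i<n. F (m + i))"
  by (induction n) (simp_all add: add.assoc)

lemma posi_add:
  assumes "p \<in> posi X" "q \<in> posi X"
  shows "(\<lambda>x. p x + q x) \<in> posi X"
proof -
  obtain m :: nat and lam fs where p: "m \<ge> 1" "\<forall>i<m. lam i > (0::real) \<and> fs i \<in> X"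
    "p = (\<lambda>x. \<Sum>i<m. lam i * fs i x)"
    using assms(1) by (rule posiE)
  obtain n :: nat and mu gs where q: "n \<ge> 1" "\<forall>i<n. mu i > (0::real) \<and> gs i \<in> X"
    "q = (\<lambda>x. \<Sum>i<n. mu i * gs i x)"
    using assms(2) by (rule posiE)
  define lam' where "lam' i = (if i < m then lam i else mu (i - m))" for i
  define fs' where "fs' i = (if i < m then fs i else gs (i - m))" for i
  have "(\<lambda>x. \<Sum>i<m + n. lam' i * fs' i x) \<in> posi X"
    using p(1,2) q(2) by (intro posiI) (auto simp: lam'_def fs'_def)
  moreover have "(\<lambda>x. \<Sum>i<m + n. lam' i * fs' i x) = (\<lambda>x. p x + q x)"
    using p(3) q(3) by (simp add: sum_lessThan_add_nat lam'_def fs'_def)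
  ultimately show ?thesis by simp
qed

lemma posi_scale:
  assumes "p \<in> posi X" "(c::real) > 0"
  shows "(\<lambda>x. c * p x) \<in> posi X"
proof -
  obtain n :: nat and lam fs where p: "n \<ge> 1" "\<forall>i<n. lam i > (0::real) \<and> fs i \<in> X"
    "p = (\<lambda>x. \<Sum>i<n. lam i * fs i x)"
    using assms(1) by (rule posiE)
  have "(\<lambda>x. \<Sum>i<n. (c * lam i) * fs i x) \<in> posi X"
    using p(1,2) assms(2) by (intro posiI) auto
  then show ?thesis
    using p(3) by (simp add: sum_distrib_left mult.assoc)
qed

lemma posi_sum:
  assumes "finite I" "I \<noteq> {}" "\<And>i. i \<in> I \<Longrightarrow> f i \<in> posi X"
  shows "(\<lambda>x. \<Sum>i\<in>I. f i x) \<in> posi X"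
  using assms by (induction I rule: finite_ne_induct) (auto intro: posi_add)

lemma posi_posi: "posi (posi X) = posi X"
proof
  show "posi (posi X) \<subseteq> posi X"
  proof
    fix g assume "g \<in> posi (posi X)"
    then obtain n :: nat and lam fs where g: "n \<ge> 1" "\<forall>i<n. lam i > (0::real) \<and> fs i \<in> posi X"
      "g = (\<lambda>x. \<Sum>i<n. lam i * fs i x)"
      by (rule posiE)
    have "(\<lambda>x. lam i * fs i x) \<in> posi X" if "i < n" for i
      using g(2) that by (simp add: posi_scale)
    then show "g \<in> posi X"
      unfolding g(3) using g(1) by (intro posi_sum) (auto simp: lessThan_empty_iff)
  qed
qed (rule posi_superset)

lemma natext_cong_posi:
  assumes "A \<subseteq> A'" "A' \<subseteq> posi A"
  shows "natext A = natext A'"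
proof
  show "natext A \<subseteq> natext A'"
    unfolding natext_def using assms(1) by (intro posi_mono) blast
  have "A' \<union> gambles_pos \<subseteq> posi (A \<union> gambles_pos)"
    using assms(2) posi_mono[of A "A \<union> gambles_pos"] posi_superset[of "A \<union> gambles_pos"] by blast
  then show "natext A' \<subseteq> natext A"
    unfolding natext_def using posi_mono posi_posi by metis
qed

text \<open>The gambles \<open>f(p z) \<I>\<^bsub>E\<^esub>(q z)\<close> with \<open>f \<in> D\<close> and \<open>E \<in> \<B> \<union> {UNIV}\<close>; with the projections
  \<open>p, q\<close> of a product these are the generators \<open>\<A>\<^bsub>1\<rightarrow>2\<^esub>\<close> and \<open>\<A>\<^bsub>2\<rightarrow>1\<^esub>\<close> of \<open>\<D>\<^sub>1 \<otimes> \<D>\<^sub>2\<close>.\<close>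
definition conditioned_gambles ::
    "('c \<Rightarrow> 'a) \<Rightarrow> ('c \<Rightarrow> 'b) \<Rightarrow> ('a \<Rightarrow> real) set \<Rightarrow> 'b set set \<Rightarrow> ('c \<Rightarrow> real) set" where
  "conditioned_gambles p q D B = {(\<lambda>z. f (p z) * indicator E (q z)) | f E. f \<in> D \<and> E \<in> B \<union> {UNIV}}"

lemma tensor_sdg_conv_conditioned_gambles:
  "tensor_sdg B1 B2 D1 D2 =
     natext (conditioned_gambles snd fst D2 B1 \<union> conditioned_gambles fst snd D1 B2)"
proof -
  have cylinder: "(\<lambda>(x1, x2). f x2 * indicator E x1) = (\<lambda>z. f (snd z) * indicator E (fst z))"
    "(\<lambda>(x1, x2). g x1 * indicator F x2) = (\<lambda>z. g (fst z) * indicator F (snd z))"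
    for f :: "'b \<Rightarrow> real" and g :: "'a \<Rightarrow> real" and E :: "'a set" and F :: "'b set"
    by auto
  show ?thesis
    unfolding tensor_sdg_def conditioned_gambles_def by (simp only: cylinder)
qed

lemma conditioned_gambles_mono: "B \<subseteq> B' \<Longrightarrow> conditioned_gambles p q D B \<subseteq> conditioned_gambles p q D B'"
  unfolding conditioned_gambles_def by blast

lemma indicator_Union_disjoint:
  assumes "finite S" "pairwise disjnt S"
  shows "indicator (\<Union>S) x = (\<Sum>E\<in>S. indicator E x :: real)"
proof -
  have "disjoint_family_on id S"
    using assms(2) by (auto simp: disjoint_family_on_def pairwise_def disjnt_def)
  then show ?thesis
    using indicator_UN_disjoint[OF assms(1), of id x] by simp
qed

lemma conditioned_gambles_refine:
  assumes "\<forall>E \<in> B'. fin_disj_union_of B E"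
  shows "conditioned_gambles p q D B' \<subseteq> posi (conditioned_gambles p q D B)"
proof
  fix g assume "g \<in> conditioned_gambles p q D B'"
  then obtain f E where f: "f \<in> D" and E: "E \<in> B' \<union> {UNIV}"
    and g: "g = (\<lambda>z. f (p z) * indicator E (q z))"
    unfolding conditioned_gambles_def by blast
  have generator: "(\<lambda>z. f (p z) * indicator F (q z)) \<in> posi (conditioned_gambles p q D B)"
    if "F \<in> B \<union> {UNIV}" for F
  proof -
    have "(\<lambda>z. f (p z) * indicator F (q z)) \<in> conditioned_gambles p q D B"
      using f that unfolding conditioned_gambles_def by blast
    then show ?thesis using posi_superset by blast
  qed
  show "g \<in> posi (conditioned_gambles p q D B)"
  proof (cases "E = UNIV")
    case True
    then show ?thesis using g generator[of UNIV] by simp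
  next
    case False
    with E have "fin_disj_union_of B E" using assms by simp
    then obtain S where S: "finite S" "S \<noteq> {}" "S \<subseteq> B" "pairwise disjnt S" "E = \<Union>S"
      unfolding fin_disj_union_of_def by blast
    then have "g = (\<lambda>z. \<Sum>F\<in>S. f (p z) * indicator F (q z))"
      using g by (simp add: indicator_Union_disjoint sum_distrib_left)
    also have "\<dots> \<in> posi (conditioned_gambles p q D B)"
      using S(1-3) generator by (intro posi_sum) auto
    finally show ?thesis .
  qed
qed

lemma tensor_sdg_refine:
  assumes "B1 \<subseteq> B1'" "\<forall>E \<in> B1'. fin_disj_union_of B1 E"
    and "B2 \<subseteq> B2'" "\<forall>E \<in> B2'. fin_disj_union_of B2 E"
  shows "tensor_sdg B1 B2 D1 D2 = tensor_sdg B1' B2' D1 D2"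
  unfolding tensor_sdg_conv_conditioned_gambles
proof (rule natext_cong_posi)
  show "conditioned_gambles snd fst D2 B1 \<union> conditioned_gambles fst snd D1 B2
      \<subseteq> conditioned_gambles snd fst D2 B1' \<union> conditioned_gambles fst snd D1 B2'"
    using assms(1,3) by (intro Un_mono conditioned_gambles_mono)
  show "conditioned_gambles snd fst D2 B1' \<union> conditioned_gambles fst snd D1 B2'
      \<subseteq> posi (conditioned_gambles snd fst D2 B1 \<union> conditioned_gambles fst snd D1 B2)"
    using conditioned_gambles_refine[OF assms(2)] conditioned_gambles_refine[OF assms(4)]
      posi_mono[of _ "conditioned_gambles snd fst D2 B1 \<union> conditioned_gambles fst snd D1 B2"]
    by blast
qed

theorem proposition20:
  fixes B1 B1' :: "'a set set" and B2 B2' :: "'b set set"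
    and D1 :: "('a \<Rightarrow> real) set" and D2 :: "('b \<Rightarrow> real) set"
    and C1 :: "(('a \<Rightarrow> real) \<times> 'a set) set" and P1 :: "('a \<Rightarrow> real) \<Rightarrow> 'a set \<Rightarrow> ereal"
    and C2 :: "(('b \<Rightarrow> real) \<times> 'b set) set" and P2 :: "('b \<Rightarrow> real) \<Rightarrow> 'b set \<Rightarrow> ereal"
  assumes "B1 \<subseteq> Pow UNIV - {{}}" and "B2 \<subseteq> Pow UNIV - {{}}"
    and "B1 \<subseteq> B1'" and "\<forall>E \<in> B1'. fin_disj_union_of B1 E"
    and "B2 \<subseteq> B2'" and "\<forall>E \<in> B2'. fin_disj_union_of B2 E"
    and "coherent_sdg D1" and "coherent_sdg D2"
    and "coherent_clp C1 P1" and "coherent_clp C2 P2"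
  shows "tensor_sdg B1 B2 D1 D2 = tensor_sdg B1' B2' D1 D2
    \<and> (\<forall>(f, B) \<in> cond_domain. tensor_lp B1 B2 C1 P1 C2 P2 f B = tensor_lp B1' B2' C1 P1 C2 P2 f B)"
  using tensor_sdg_refine[OF assms(3-6)] unfolding tensor_lp_def by simp

end
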